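(* Let $\mathcal{A}\subseteq\mathcal{B}$ be sub-$\sigma$-algebras of a complete probability space $(\Omega,\mathcal{F},P)$, where $\mathcal{B}$ is generated by a countable family of events (together with the $P$-null events). Let $L$ be a linear subspace of $L_\infty(\mathcal{B})$ and $x:L\to L_\infty(\mathcal{A})$ a monotone linear operator. Assume that \[x(X)\le M(Y)\qquad\text{for all } X\in L,\ Y\in L^+_\infty(\mathcal{B}) \text{ with } X\le Y,\] for some regular, weak $\mathcal{A}$-homogeneous, sublinear operator $M:L^+_\infty(\mathcal{B})\to L^+_\infty(\mathcal{A})$. Then $x$ can be extended to a monotone linear operator $x:L_\infty(\mathcal{B})\to L_\infty(\mathcal{A})$ such that \[x(X)\le M(Y)\qquad\text{for all } X\in L_\infty(\mathcal{B}),\ Y\in L^+_\infty(\mathcal{B}) \text{ with } X\le Y.\] Furthermore, this extension is continuous from above and $\mathcal{A}$-homogeneous.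
   Context: All (in)equalities between random variables hold $P$-a.s. Sublinear: $M(X+Y)\le M(X)+M(Y)$ and $M(\lambda X)=\lambda M(X)$ for real $\lambda\ge0$. Regular: for every nonincreasing sequence $X_n\downarrow0$ $P$-a.s., $M(X_n)\to0$ $P$-a.s. Weak $\mathcal{A}$-homogeneous: $M(1_AX)=1_AM(X)$ for all $A\in\mathcal{A}$ and all $X$ in the domain. $\mathcal{A}$-homogeneous: $x(\lambda X)=\lambda x(X)$ for all $\lambda\in L^+_\infty(\mathcal{A})$. Monotone: $X\ge X'\Rightarrow x(X)\ge x(X')$. Continuous from above: for every nonincreasing sequence $X_n$ with $P$-a.s. limit $X$, $x(X_n)\downarrow x(X)$ $P$-a.s. *)

theory Defs
  imports "HOL-Probability.Probability"
begin

text \<open>Elements of L_infty(N) (w.r.t. the probability measure M), represented by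
  N-measurable, M-essentially bounded real functions; (in)equalities are M-a.s.\<close>
definition Linf :: "'a measure \<Rightarrow> 'a measure \<Rightarrow> ('a \<Rightarrow> real) set" where
  "Linf M N = {f. f \<in> borel_measurable N \<and> (\<exists>c. AE \<omega> in M. \<bar>f \<omega>\<bar> \<le> c)}"

definition Linf_pos :: "'a measure \<Rightarrow> 'a measure \<Rightarrow> ('a \<Rightarrow> real) set" where
  "Linf_pos M N = {f \<in> Linf M N. AE \<omega> in M. 0 \<le> f \<omega>}"

definition respects_ae :: "'a measure \<Rightarrow> ('a \<Rightarrow> real) set \<Rightarrow> (('a \<Rightarrow> real) \<Rightarrow> ('a \<Rightarrow> real)) \<Rightarrow> bool" where
  "respects_ae M D T \<longleftrightarrow> (\<forall>X\<in>D. \<forall>Y\<in>D. (AE \<omega> in M. X \<omega> = Y \<omega>) \<longrightarrow> (AE \<omega> in M. T X \<omega> = T Y \<omega>))"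

definition lin_subspace :: "('a \<Rightarrow> real) set \<Rightarrow> bool" where
  "lin_subspace L \<longleftrightarrow> (\<lambda>_. 0) \<in> L \<and>
     (\<forall>X\<in>L. \<forall>Y\<in>L. \<forall>a b::real. (\<lambda>\<omega>. a * X \<omega> + b * Y \<omega>) \<in> L)"

definition linear_op :: "'a measure \<Rightarrow> ('a \<Rightarrow> real) set \<Rightarrow> (('a \<Rightarrow> real) \<Rightarrow> ('a \<Rightarrow> real)) \<Rightarrow> bool" where
  "linear_op M D T \<longleftrightarrow> (\<forall>X\<in>D. \<forall>Y\<in>D. \<forall>a b::real.
     AE \<omega> in M. T (\<lambda>\<eta>. a * X \<eta> + b * Y \<eta>) \<omega> = a * T X \<omega> + b * T Y \<omega>)"

definition monotone_op :: "'a measure \<Rightarrow> ('a \<Rightarrow> real) set \<Rightarrow> (('a \<Rightarrow> real) \<Rightarrow> ('a \<Rightarrow> real)) \<Rightarrow> bool" where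
  "monotone_op M D T \<longleftrightarrow> (\<forall>X\<in>D. \<forall>Y\<in>D. (AE \<omega> in M. Y \<omega> \<le> X \<omega>) \<longrightarrow> (AE \<omega> in M. T Y \<omega> \<le> T X \<omega>))"

definition sublinear_op :: "'a measure \<Rightarrow> ('a \<Rightarrow> real) set \<Rightarrow> (('a \<Rightarrow> real) \<Rightarrow> ('a \<Rightarrow> real)) \<Rightarrow> bool" where
  "sublinear_op M D T \<longleftrightarrow>
     (\<forall>X\<in>D. \<forall>Y\<in>D. AE \<omega> in M. T (\<lambda>\<eta>. X \<eta> + Y \<eta>) \<omega> \<le> T X \<omega> + T Y \<omega>) \<and>
     (\<forall>X\<in>D. \<forall>c::real. 0 \<le> c \<longrightarrow> (AE \<omega> in M. T (\<lambda>\<eta>. c * X \<eta>) \<omega> = c * T X \<omega>))"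

definition regular_op :: "'a measure \<Rightarrow> ('a \<Rightarrow> real) set \<Rightarrow> (('a \<Rightarrow> real) \<Rightarrow> ('a \<Rightarrow> real)) \<Rightarrow> bool" where
  "regular_op M D T \<longleftrightarrow> (\<forall>Xs. (\<forall>n. Xs n \<in> D) \<longrightarrow>
     (AE \<omega> in M. \<forall>n. Xs (Suc n) \<omega> \<le> Xs n \<omega>) \<longrightarrow>
     (AE \<omega> in M. (\<lambda>n. Xs n \<omega>) \<longlonglongrightarrow> 0) \<longrightarrow>
     (AE \<omega> in M. (\<lambda>n. T (Xs n) \<omega>) \<longlonglongrightarrow> 0))"

definition weak_homogeneous_op :: "'a measure \<Rightarrow> 'a measure \<Rightarrow> ('a \<Rightarrow> real) set \<Rightarrow> (('a \<Rightarrow> real) \<Rightarrow> ('a \<Rightarrow> real)) \<Rightarrow> bool" where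
  "weak_homogeneous_op M A D T \<longleftrightarrow> (\<forall>S\<in>sets A. \<forall>X\<in>D.
     AE \<omega> in M. T (\<lambda>\<eta>. indicator S \<eta> * X \<eta>) \<omega> = indicator S \<omega> * T X \<omega>)"

definition homogeneous_op :: "'a measure \<Rightarrow> 'a measure \<Rightarrow> ('a \<Rightarrow> real) set \<Rightarrow> (('a \<Rightarrow> real) \<Rightarrow> ('a \<Rightarrow> real)) \<Rightarrow> bool" where
  "homogeneous_op M A D T \<longleftrightarrow> (\<forall>l\<in>Linf_pos M A. \<forall>X\<in>D.
     AE \<omega> in M. T (\<lambda>\<eta>. l \<eta> * X \<eta>) \<omega> = l \<omega> * T X \<omega>)"

definition cont_above_op :: "'a measure \<Rightarrow> ('a \<Rightarrow> real) set \<Rightarrow> (('a \<Rightarrow> real) \<Rightarrow> ('a \<Rightarrow> real)) \<Rightarrow> bool" where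
  "cont_above_op M D T \<longleftrightarrow> (\<forall>Xs X. (\<forall>n. Xs n \<in> D) \<longrightarrow> X \<in> D \<longrightarrow>
     (AE \<omega> in M. \<forall>n. Xs (Suc n) \<omega> \<le> Xs n \<omega>) \<longrightarrow>
     (AE \<omega> in M. (\<lambda>n. Xs n \<omega>) \<longlonglongrightarrow> X \<omega>) \<longrightarrow>
     (AE \<omega> in M. (\<forall>n. T (Xs (Suc n)) \<omega> \<le> T (Xs n) \<omega>) \<and> (\<lambda>n. T (Xs n) \<omega>) \<longlonglongrightarrow> T X \<omega>))"

end

theory Submission
  imports Defs
begin

text \<open>
  Hahn--Banach by Zorn's lemma. Partial extensions are ordered by inclusion of their graphs; a
  maximal one is total, since a partial extension G not defined at Z can be extended to the span
  of its domain and Z. The value c at Z has to satisfy \<open>w - M(Y') \<le> c \<le> M(Y) - u\<close> whenever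
  \<open>W - Z \<le> Y'\<close> and \<open>U + Z \<le> Y\<close>; these lower and upper values are ordered by sublinearity of M,
  and c is taken as the essential supremum of the lower values in \<open>L\<^sub>\<infinity>(\<A>)\<close>. That essential
  supremum exists because the expectation of the arctangent of the supremum over countable
  subfamilies attains its maximum.

  The properties of the total extension only use its domination by M: monotonicity because
  \<open>M(0) = 0\<close>, continuity from above by regularity of M, locality \<open>x(1\<^sub>S X) = 1\<^sub>S x(X)\<close> by weak
  homogeneity, and \<open>\<A>\<close>-homogeneity by comparing \<open>l\<close> with constants on its level sets.
\<close>

section \<open>Essential suprema\<close>

lemma ex_countable_subset_maximizing:
  fixes \<Phi> :: "'b set \<Rightarrow> real"
  assumes bounded: "\<And>G. countable G \<Longrightarrow> G \<subseteq> F \<Longrightarrow> \<Phi> G \<le> K"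
    and mono: "\<And>G G'. G \<subseteq> G' \<Longrightarrow> countable G' \<Longrightarrow> G' \<subseteq> F \<Longrightarrow> \<Phi> G \<le> \<Phi> G'"
  obtains G where "countable G" "G \<subseteq> F"
    "\<And>G'. G \<subseteq> G' \<Longrightarrow> countable G' \<Longrightarrow> G' \<subseteq> F \<Longrightarrow> \<Phi> G' = \<Phi> G"
proof -
  define Cs where "Cs = {G. countable G \<and> G \<subseteq> F}"
  have Cs_ne: "Cs \<noteq> {}" and bdd: "bdd_above (\<Phi> ` Cs)"
    using bounded unfolding Cs_def by (auto intro!: bdd_aboveI2[where M = K])
  define s where "s = (SUP G\<in>Cs. \<Phi> G)"
  have "\<exists>G\<in>Cs. s - inverse (real (Suc n)) < \<Phi> G" for n
    using less_cSUP_iff[OF Cs_ne bdd, of "s - inverse (real (Suc n))"] by (simp add: s_def)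
  then obtain Gn where Gn: "\<And>n. Gn n \<in> Cs" "\<And>n. s - inverse (real (Suc n)) < \<Phi> (Gn n)"
    by metis
  define G where "G = (\<Union>n. Gn n)"
  have G: "G \<in> Cs"
    using Gn(1) unfolding G_def Cs_def by auto
  have "\<Phi> (Gn n) \<le> \<Phi> G" for n
    using mono[of "Gn n" G] G unfolding G_def Cs_def by auto
  with Gn(2) have "s - inverse (real (Suc n)) \<le> \<Phi> G" for n
    by (meson less_imp_le order_less_le_trans)
  moreover have "(\<lambda>n. s - inverse (real (Suc n))) \<longlonglongrightarrow> s"
    using tendsto_diff[OF tendsto_const LIMSEQ_inverse_real_of_nat] by simp
  ultimately have s_le: "s \<le> \<Phi> G"
    by (intro LIMSEQ_le_const2) auto
  show ?thesis
  proof
    show "countable G" "G \<subseteq> F"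
      using G unfolding Cs_def by auto
  next
    fix G' assume G': "G \<subseteq> G'" "countable G'" "G' \<subseteq> F"
    then have "\<Phi> G' \<le> s"
      unfolding s_def Cs_def using bdd by (intro cSUP_upper) (auto simp: Cs_def)
    with s_le mono[OF G'] show "\<Phi> G' = \<Phi> G"
      by linarith
  qed
qed

lemma abs_arctan_le_pi_half: "\<bar>arctan x\<bar> \<le> pi/2"
  using arctan_bounded[of x] by linarith

lemma (in finite_measure) integrable_arctan_comp:
  "f \<in> borel_measurable M \<Longrightarrow> integrable M (\<lambda>\<omega>. arctan (f \<omega>))"
  by (rule integrable_const_bound[where B = "pi/2"], rule AE_I2)
    (simp_all only: real_norm_def abs_arctan_le_pi_half measurable_compose[OF _ borel_measurable_arctan])

lemma (in finite_measure) AE_eq_if_le_and_integral_arctan_eq: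
  assumes [measurable]: "f \<in> borel_measurable M" "g \<in> borel_measurable M"
    and le: "\<And>\<omega>. f \<omega> \<le> g \<omega>"
    and eq: "(\<integral>\<omega>. arctan (f \<omega>) \<partial>M) = (\<integral>\<omega>. arctan (g \<omega>) \<partial>M)"
  shows "AE \<omega> in M. f \<omega> = g \<omega>"
proof -
  have "(\<integral>\<omega>. arctan (g \<omega>) - arctan (f \<omega>) \<partial>M) = 0"
    using eq by (simp add: integrable_arctan_comp)
  then have "AE \<omega> in M. arctan (g \<omega>) - arctan (f \<omega>) = 0"
    using le Bochner_Integration.integrable_diff[OF integrable_arctan_comp integrable_arctan_comp]
    by (subst (asm) integral_nonneg_eq_0_iff_AE) (auto intro: arctan_monotone' integrable_arctan_comp)
  then show ?thesis
    by eventually_elim (simp add: arctan_eq_iff)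
qed

lemma (in prob_space) ex_countable_subset_AE_maximal:
  fixes H :: "'b set \<Rightarrow> 'a \<Rightarrow> real"
  assumes meas: "\<And>G. countable G \<Longrightarrow> G \<subseteq> F \<Longrightarrow> H G \<in> borel_measurable M"
    and mono: "\<And>G G' \<omega>. G \<subseteq> G' \<Longrightarrow> H G \<omega> \<le> H G' \<omega>"
  obtains G where "countable G" "G \<subseteq> F"
    "\<And>G'. G \<subseteq> G' \<Longrightarrow> countable G' \<Longrightarrow> G' \<subseteq> F \<Longrightarrow> AE \<omega> in M. H G \<omega> = H G' \<omega>"
proof -
  define \<Phi> where "\<Phi> G = (\<integral>\<omega>. arctan (H G \<omega>) \<partial>M)" for G
  have integrable: "integrable M (\<lambda>\<omega>. arctan (H G \<omega>))" if "countable G" "G \<subseteq> F" for G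
    using integrable_arctan_comp[OF meas[OF that]] .
  obtain G where G: "countable G" "G \<subseteq> F"
    and max: "\<And>G'. G \<subseteq> G' \<Longrightarrow> countable G' \<Longrightarrow> G' \<subseteq> F \<Longrightarrow> \<Phi> G' = \<Phi> G"
  proof (rule ex_countable_subset_maximizing[where K = "pi/2"])
    show "\<Phi> G \<le> pi/2" if "countable G" "G \<subseteq> F" for G
    proof -
      have "\<Phi> G \<le> (\<integral>\<omega>. pi/2 \<partial>M)"
        unfolding \<Phi>_def using integrable[OF that] arctan_ubound
        by (intro integral_mono) (auto intro: less_imp_le)
      then show ?thesis
        by (simp add: prob_space)
    qed
    show "\<Phi> G \<le> \<Phi> G'" if "G \<subseteq> G'" "countable G'" "G' \<subseteq> F" for G G'
      unfolding \<Phi>_def using that integrable countable_subset[of G G'] mono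
      by (intro integral_mono arctan_monotone') auto
  qed blast
  show ?thesis
  proof (rule that[OF G])
    fix G' assume G': "G \<subseteq> G'" "countable G'" "G' \<subseteq> F"
    show "AE \<omega> in M. H G \<omega> = H G' \<omega>"
    proof (rule AE_eq_if_le_and_integral_arctan_eq)
      show "H G \<in> borel_measurable M" "H G' \<in> borel_measurable M"
        using G G' by (auto intro: meas)
      show "H G \<omega> \<le> H G' \<omega>" for \<omega>
        using G'(1) by (rule mono)
      show "(\<integral>\<omega>. arctan (H G \<omega>) \<partial>M) = (\<integral>\<omega>. arctan (H G' \<omega>) \<partial>M)"
        using max[OF G'] unfolding \<Phi>_def by simp
    qed
  qed
qed

lemma ex_ess_sup:
  fixes F :: "('a \<Rightarrow> real) set"
  assumes "prob_space M" and sub: "subalgebra M A"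
    and F: "F \<subseteq> borel_measurable A" and f0: "f0 \<in> F"
    and g: "g \<in> borel_measurable A" "\<And>f. f \<in> F \<Longrightarrow> AE \<omega> in M. f \<omega> \<le> g \<omega>"
  obtains h where "h \<in> borel_measurable A" "\<And>f. f \<in> F \<Longrightarrow> AE \<omega> in M. f \<omega> \<le> h \<omega>"
    "\<And>u. (\<And>f. f \<in> F \<Longrightarrow> AE \<omega> in M. f \<omega> \<le> u \<omega>) \<Longrightarrow> AE \<omega> in M. h \<omega> \<le> u \<omega>"
proof -
  interpret prob_space M by fact
  define g' where "g' \<omega> = max (g \<omega>) (f0 \<omega>)" for \<omega>
  \<comment> \<open>\<open>f0\<close> keeps the index set nonempty (\<open>Sup {}\<close> is junk); truncation at \<open>g'\<close> keeps it bounded\<close>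
  define H where "H G \<omega> = (SUP f\<in>insert f0 G. min (f \<omega>) (g' \<omega>))" for G \<omega>
  have bdd: "bdd_above ((\<lambda>f. min (f \<omega>) (g' \<omega>)) ` G)" for G \<omega>
    by (rule bdd_aboveI2[where M = "g' \<omega>"]) simp
  have H_mono: "H G \<omega> \<le> H G' \<omega>" if "G \<subseteq> G'" for G G' \<omega>
    unfolding H_def using that by (intro cSUP_subset_mono bdd) auto
  have H_A: "H G \<in> borel_measurable A" if "countable G" "G \<subseteq> F" for G
  proof -
    have [measurable]: "g' \<in> borel_measurable A"
      unfolding g'_def using F f0 g(1) by auto
    show ?thesis
      unfolding H_def using that F f0 by (intro borel_measurable_cSUP bdd) auto
  qed
  obtain G where G: "countable G" "G \<subseteq> F"
    and max: "\<And>G'. G \<subseteq> G' \<Longrightarrow> countable G' \<Longrightarrow> G' \<subseteq> F \<Longrightarrow> AE \<omega> in M. H G \<omega> = H G' \<omega>"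
  proof (rule ex_countable_subset_AE_maximal[of F H])
    show "H G \<in> borel_measurable M" if "countable G" "G \<subseteq> F" for G
      using measurable_from_subalg[OF sub H_A[OF that]] .
    show "H G \<omega> \<le> H G' \<omega>" if "G \<subseteq> G'" for G G' \<omega>
      using that by (rule H_mono)
  qed (rule that)
  show ?thesis
  proof
    show "H G \<in> borel_measurable A"
      using H_A[OF G] .
  next
    fix f assume f: "f \<in> F"
    have upper: "min (f \<omega>) (g' \<omega>) \<le> H (insert f G) \<omega>" for \<omega>
      unfolding H_def by (intro cSUP_upper bdd) auto
    have "AE \<omega> in M. H G \<omega> = H (insert f G) \<omega>"
      using G f by (intro max) auto
    then show "AE \<omega> in M. f \<omega> \<le> H G \<omega>"
      using g(2)[OF f]
    proof eventually_elim
      case (elim \<omega>)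
      then show ?case
        using upper[of \<omega>] by (simp add: g'_def)
    qed
  next
    fix u assume "\<And>f. f \<in> F \<Longrightarrow> AE \<omega> in M. f \<omega> \<le> u \<omega>"
    then have "AE \<omega> in M. \<forall>f\<in>insert f0 G. f \<omega> \<le> u \<omega>"
      using G f0 by (subst AE_ball_countable) auto
    then show "AE \<omega> in M. H G \<omega> \<le> u \<omega>"
      unfolding H_def by eventually_elim (rule cSUP_least, auto intro: min.coboundedI1)
  qed
qed

section \<open>Essentially bounded functions\<close>

lemma LinfI: "f \<in> borel_measurable N \<Longrightarrow> (AE \<omega> in M. \<bar>f \<omega>\<bar> \<le> c) \<Longrightarrow> f \<in> Linf M N"
  unfolding Linf_def by auto

lemma Linf_measurable: "f \<in> Linf M N \<Longrightarrow> f \<in> borel_measurable N"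
  unfolding Linf_def by auto

lemma LinfE:
  assumes "f \<in> Linf M N"
  obtains c where "AE \<omega> in M. \<bar>f \<omega>\<bar> \<le> c"
  using assms unfolding Linf_def by auto

lemma Linf_lincomb:
  assumes "X \<in> Linf M N" "Y \<in> Linf M N"
  shows "(\<lambda>\<omega>. a * X \<omega> + b * Y \<omega>) \<in> Linf M N"
proof -
  obtain c1 c2 where c: "AE \<omega> in M. \<bar>X \<omega>\<bar> \<le> c1" "AE \<omega> in M. \<bar>Y \<omega>\<bar> \<le> c2"
    using LinfE[OF assms(1)] LinfE[OF assms(2)] by metis
  have [measurable]: "X \<in> borel_measurable N" "Y \<in> borel_measurable N"
    using assms by (auto dest: Linf_measurable)
  show ?thesis
  proof (rule LinfI[where c = "\<bar>a\<bar> * c1 + \<bar>b\<bar> * c2"])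
    show "AE \<omega> in M. \<bar>a * X \<omega> + b * Y \<omega>\<bar> \<le> \<bar>a\<bar> * c1 + \<bar>b\<bar> * c2"
      using c
    proof eventually_elim
      case (elim \<omega>)
      have "\<bar>a * X \<omega> + b * Y \<omega>\<bar> \<le> \<bar>a\<bar> * \<bar>X \<omega>\<bar> + \<bar>b\<bar> * \<bar>Y \<omega>\<bar>"
        by (metis abs_mult abs_triangle_ineq)
      also have "\<dots> \<le> \<bar>a\<bar> * c1 + \<bar>b\<bar> * c2"
        using elim by (intro add_mono mult_left_mono) auto
      finally show ?case .
    qed
  qed measurable
qed

lemma Linf_scale: "X \<in> Linf M N \<Longrightarrow> (\<lambda>\<omega>. a * X \<omega>) \<in> Linf M N"
  using Linf_lincomb[of X M N X a 0] by simp

lemma Linf_diff: "X \<in> Linf M N \<Longrightarrow> Y \<in> Linf M N \<Longrightarrow> (\<lambda>\<omega>. X \<omega> - Y \<omega>) \<in> Linf M N"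
  using Linf_lincomb[of X M N Y 1 "-1"] by simp

lemma Linf_mult:
  assumes "X \<in> Linf M N" "Y \<in> Linf M N"
  shows "(\<lambda>\<omega>. X \<omega> * Y \<omega>) \<in> Linf M N"
proof -
  obtain c1 c2 where c: "AE \<omega> in M. \<bar>X \<omega>\<bar> \<le> c1" "AE \<omega> in M. \<bar>Y \<omega>\<bar> \<le> c2"
    using LinfE[OF assms(1)] LinfE[OF assms(2)] by metis
  have [measurable]: "X \<in> borel_measurable N" "Y \<in> borel_measurable N"
    using assms by (auto dest: Linf_measurable)
  have "AE \<omega> in M. \<bar>X \<omega> * Y \<omega>\<bar> \<le> c1 * c2"
    using c
  proof eventually_elim
    case (elim \<omega>)
    then show ?case
      unfolding abs_mult by (intro mult_mono) auto
  qed
  then show ?thesis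
    by (rule LinfI[rotated]) measurable
qed

lemma Linf_const: "(\<lambda>_. c) \<in> Linf M N"
  by (rule LinfI[where c = "\<bar>c\<bar>"]) auto

lemma Linf_comp_contraction:
  assumes "X \<in> Linf M N" "f \<in> borel_measurable borel" "\<And>t. \<bar>f t\<bar> \<le> \<bar>t\<bar>"
  shows "(\<lambda>\<omega>. f (X \<omega>)) \<in> Linf M N"
proof -
  obtain c where "AE \<omega> in M. \<bar>X \<omega>\<bar> \<le> c"
    using assms(1) by (rule LinfE)
  then have "AE \<omega> in M. \<bar>f (X \<omega>)\<bar> \<le> c"
    by eventually_elim (rule order_trans[OF assms(3)])
  then show ?thesis
    using measurable_compose[OF Linf_measurable[OF assms(1)] assms(2)] by (rule LinfI[rotated])
qed

lemma Linf_abs: "X \<in> Linf M N \<Longrightarrow> (\<lambda>\<omega>. \<bar>X \<omega>\<bar>) \<in> Linf M N"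
  by (rule Linf_comp_contraction) auto

lemma Linf_subalgebra: "subalgebra N N' \<Longrightarrow> X \<in> Linf M N' \<Longrightarrow> X \<in> Linf M N"
  unfolding Linf_def using measurable_from_subalg by blast

lemma Linf_pos_Linf: "X \<in> Linf_pos M N \<Longrightarrow> X \<in> Linf M N"
  unfolding Linf_pos_def by auto

lemma Linf_pos_const: "0 \<le> c \<Longrightarrow> (\<lambda>_. c) \<in> Linf_pos M N"
  unfolding Linf_pos_def by (auto intro: Linf_const)

lemma Linf_pos_max_0: "X \<in> Linf M N \<Longrightarrow> (\<lambda>\<omega>. max 0 (X \<omega>)) \<in> Linf_pos M N"
  unfolding Linf_pos_def by (simp add: Linf_comp_contraction)

lemma Linf_pos_add:
  "Y \<in> Linf_pos M N \<Longrightarrow> Y' \<in> Linf_pos M N \<Longrightarrow> (\<lambda>\<omega>. Y \<omega> + Y' \<omega>) \<in> Linf_pos M N"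
  unfolding Linf_pos_def using Linf_lincomb[of Y M N Y' 1 1] by auto

lemma Linf_pos_scale: "Y \<in> Linf_pos M N \<Longrightarrow> 0 \<le> c \<Longrightarrow> (\<lambda>\<omega>. c * Y \<omega>) \<in> Linf_pos M N"
  unfolding Linf_pos_def using Linf_scale[of Y M N c] by auto

section \<open>Linear operators dominated by a sublinear operator\<close>

locale sublinear_dominator =
  fixes M A B :: "'a measure" and Mop :: "('a \<Rightarrow> real) \<Rightarrow> ('a \<Rightarrow> real)"
  assumes prob: "prob_space M" and sub_A: "subalgebra M A" and sub_B: "subalgebra M B"
    and sets_A_B: "sets A \<subseteq> sets B"
    and Mop_Linf_pos: "\<forall>Y\<in>Linf_pos M B. Mop Y \<in> Linf_pos M A"
    and regular: "regular_op M (Linf_pos M B) Mop"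
    and weak_homogeneous: "weak_homogeneous_op M A (Linf_pos M B) Mop"
    and sublinear: "sublinear_op M (Linf_pos M B) Mop"
begin

lemma space_A: "space A = space M"
  using sub_A unfolding subalgebra_def by simp

lemma Linf_A_B: "X \<in> Linf M A \<Longrightarrow> X \<in> Linf M B"
  using sub_A sub_B sets_A_B by (intro Linf_subalgebra[of B A]) (auto simp: subalgebra_def)

lemma Mop_Linf: "Y \<in> Linf_pos M B \<Longrightarrow> Mop Y \<in> Linf M A"
  using Mop_Linf_pos Linf_pos_Linf by blast

lemma Mop_add:
  "Y \<in> Linf_pos M B \<Longrightarrow> Y' \<in> Linf_pos M B \<Longrightarrow> AE \<omega> in M. Mop (\<lambda>\<eta>. Y \<eta> + Y' \<eta>) \<omega> \<le> Mop Y \<omega> + Mop Y' \<omega>"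
  using sublinear unfolding sublinear_op_def by blast

lemma Mop_scale:
  "Y \<in> Linf_pos M B \<Longrightarrow> 0 \<le> c \<Longrightarrow> AE \<omega> in M. Mop (\<lambda>\<eta>. c * Y \<eta>) \<omega> = c * Mop Y \<omega>"
  using sublinear unfolding sublinear_op_def by blast

lemma Mop_zero: "AE \<omega> in M. Mop (\<lambda>_. 0) \<omega> = 0"
  using Mop_scale[OF Linf_pos_const[of 0], of 0] by simp

lemma Mop_indicator_mult:
  "S \<in> sets A \<Longrightarrow> Y \<in> Linf_pos M B \<Longrightarrow> AE \<omega> in M. Mop (\<lambda>\<eta>. indicator S \<eta> * Y \<eta>) \<omega> = indicator S \<omega> * Mop Y \<omega>"
  using weak_homogeneous unfolding weak_homogeneous_op_def by blast

lemma Linf_indicator: "S \<in> sets A \<Longrightarrow> (\<lambda>\<eta>. indicator S \<eta> :: real) \<in> Linf M B"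
  using sets_A_B by (intro LinfI[where c = 1]) (auto simp: indicator_def)

lemma Linf_indicator_mult: "S \<in> sets A \<Longrightarrow> X \<in> Linf M B \<Longrightarrow> (\<lambda>\<eta>. indicator S \<eta> * X \<eta>) \<in> Linf M B"
  by (rule Linf_mult[OF Linf_indicator])

end

lemma eq_0_if_abs_le_div_Suc:
  fixes d K :: real
  assumes "\<And>n. \<bar>d\<bar> \<le> K / real (Suc n)"
  shows "d = 0"
proof -
  have "(\<lambda>n. K / real (Suc n)) \<longlonglongrightarrow> 0"
    using LIMSEQ_Suc[OF lim_const_over_n[of K]] by simp
  then have "\<bar>d\<bar> \<le> 0"
    using assms by (intro LIMSEQ_le_const) auto
  then show ?thesis
    by simp
qed

lemma floor_mult_Suc_bounds:
  fixes r :: real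
  shows "\<lfloor>r * real (Suc n)\<rfloor> / real (Suc n) \<le> r" "r \<le> (\<lfloor>r * real (Suc n)\<rfloor> + 1) / real (Suc n)"
  using floor_correct[of "r * real (Suc n)"] by (simp_all add: divide_le_eq le_divide_eq)

locale dominated_linear_op = sublinear_dominator +
  fixes T :: "('a \<Rightarrow> real) \<Rightarrow> ('a \<Rightarrow> real)"
  assumes linear: "linear_op M (Linf M B) T"
    and dominated: "\<forall>X\<in>Linf M B. \<forall>Y\<in>Linf_pos M B. (AE \<omega> in M. X \<omega> \<le> Y \<omega>) \<longrightarrow> (AE \<omega> in M. T X \<omega> \<le> Mop Y \<omega>)"
begin

lemma lincomb:
  "X \<in> Linf M B \<Longrightarrow> Y \<in> Linf M B \<Longrightarrow> AE \<omega> in M. T (\<lambda>\<eta>. a * X \<eta> + b * Y \<eta>) \<omega> = a * T X \<omega> + b * T Y \<omega>"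
  using linear unfolding linear_op_def by blast

lemma scale: "X \<in> Linf M B \<Longrightarrow> AE \<omega> in M. T (\<lambda>\<eta>. a * X \<eta>) \<omega> = a * T X \<omega>"
  using lincomb[of X X a 0] by simp

lemma diff: "X \<in> Linf M B \<Longrightarrow> Y \<in> Linf M B \<Longrightarrow> AE \<omega> in M. T (\<lambda>\<eta>. X \<eta> - Y \<eta>) \<omega> = T X \<omega> - T Y \<omega>"
  using lincomb[of X Y 1 "-1"] by simp

lemma zero: "AE \<omega> in M. T (\<lambda>_. 0) \<omega> = 0"
  using scale[OF Linf_const, of 0 0] by simp

lemma dominatedD:
  "X \<in> Linf M B \<Longrightarrow> Y \<in> Linf_pos M B \<Longrightarrow> (AE \<omega> in M. X \<omega> \<le> Y \<omega>) \<Longrightarrow> AE \<omega> in M. T X \<omega> \<le> Mop Y \<omega>"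
  using dominated by blast

lemma mono:
  assumes X: "X \<in> Linf M B" and Y: "Y \<in> Linf M B" and le: "AE \<omega> in M. Y \<omega> \<le> X \<omega>"
  shows "AE \<omega> in M. T Y \<omega> \<le> T X \<omega>"
proof -
  have "AE \<omega> in M. T (\<lambda>\<eta>. Y \<eta> - X \<eta>) \<omega> \<le> Mop (\<lambda>_. 0) \<omega>"
    using le by (intro dominatedD Linf_diff Y X Linf_pos_const) auto
  then show ?thesis
    using Mop_zero diff[OF Y X] by eventually_elim simp
qed

lemma AE_cong:
  assumes "X \<in> Linf M B" "Y \<in> Linf M B" "AE \<omega> in M. X \<omega> = Y \<omega>"
  shows "AE \<omega> in M. T X \<omega> = T Y \<omega>"
proof -
  have "AE \<omega> in M. X \<omega> \<le> Y \<omega>" "AE \<omega> in M. Y \<omega> \<le> X \<omega>"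
    using assms(3) by auto
  then have "AE \<omega> in M. T X \<omega> \<le> T Y \<omega>" "AE \<omega> in M. T Y \<omega> \<le> T X \<omega>"
    using mono assms(1,2) by blast+
  then show ?thesis
    by eventually_elim simp
qed

lemma abs_le_Mop_abs:
  assumes X: "X \<in> Linf M B"
  shows "AE \<omega> in M. \<bar>T X \<omega>\<bar> \<le> Mop (\<lambda>\<eta>. \<bar>X \<eta>\<bar>) \<omega>"
proof -
  have abs_X: "(\<lambda>\<eta>. \<bar>X \<eta>\<bar>) \<in> Linf_pos M B"
    unfolding Linf_pos_def using Linf_abs[OF X] by simp
  have "AE \<omega> in M. T X \<omega> \<le> Mop (\<lambda>\<eta>. \<bar>X \<eta>\<bar>) \<omega>"
    by (rule dominatedD[OF X abs_X]) simp
  moreover have "AE \<omega> in M. T (\<lambda>\<eta>. (-1) * X \<eta>) \<omega> \<le> Mop (\<lambda>\<eta>. \<bar>X \<eta>\<bar>) \<omega>"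
    by (rule dominatedD[OF Linf_scale[OF X] abs_X]) simp
  ultimately show ?thesis
    using scale[OF X, of "-1"] by eventually_elim auto
qed

lemma abs_le:
  assumes X: "X \<in> Linf M B" and W: "W \<in> Linf M B" and le: "AE \<omega> in M. \<bar>X \<omega>\<bar> \<le> W \<omega>"
  shows "AE \<omega> in M. \<bar>T X \<omega>\<bar> \<le> T W \<omega>"
proof -
  have "AE \<omega> in M. T X \<omega> \<le> T W \<omega>"
    using le by (intro mono X W) (auto elim: eventually_mono)
  moreover have "AE \<omega> in M. T (\<lambda>\<eta>. (-1) * X \<eta>) \<omega> \<le> T W \<omega>"
    using le by (intro mono Linf_scale X W) (auto elim: eventually_mono)
  ultimately show ?thesis
    using scale[OF X, of "-1"] by eventually_elim auto
qed

lemma tendsto_zero_if_decreasing_to_zero: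
  assumes D: "\<And>n. D n \<in> Linf_pos M B" and dec: "AE \<omega> in M. \<forall>n. D (Suc n) \<omega> \<le> D n \<omega>"
    and lim: "AE \<omega> in M. (\<lambda>n. D n \<omega>) \<longlonglongrightarrow> 0"
  shows "AE \<omega> in M. (\<lambda>n. T (D n) \<omega>) \<longlonglongrightarrow> 0"
proof -
  have "AE \<omega> in M. (\<lambda>n. Mop (D n) \<omega>) \<longlonglongrightarrow> 0"
    using regular D dec lim unfolding regular_op_def by blast
  moreover have "AE \<omega> in M. \<forall>n. T (\<lambda>_. 0) \<omega> \<le> T (D n) \<omega> \<and> T (D n) \<omega> \<le> Mop (D n) \<omega>"
    unfolding AE_all_countable using D
    by (auto intro!: eventually_conj mono dominatedD Linf_const simp: Linf_pos_def)
  ultimately show ?thesis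
    using zero
  proof eventually_elim
    case (elim \<omega>)
    show ?case
    proof (rule tendsto_sandwich[of "\<lambda>_. 0" _ _ "\<lambda>n. Mop (D n) \<omega>"])
      show "\<forall>\<^sub>F n in sequentially. 0 \<le> T (D n) \<omega>" "\<forall>\<^sub>F n in sequentially. T (D n) \<omega> \<le> Mop (D n) \<omega>"
        using elim by auto
    qed (use elim in auto)
  qed
qed

lemma cont_above: "cont_above_op M (Linf M B) T"
  unfolding cont_above_op_def
proof (intro allI impI)
  fix Xs X assume Xs: "\<forall>n. Xs n \<in> Linf M B" and X: "X \<in> Linf M B"
    and dec: "AE \<omega> in M. \<forall>n. Xs (Suc n) \<omega> \<le> Xs n \<omega>" and lim: "AE \<omega> in M. (\<lambda>n. Xs n \<omega>) \<longlonglongrightarrow> X \<omega>"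
  define D where "D n \<eta> = Xs n \<eta> - X \<eta>" for n \<eta>
  have "AE \<omega> in M. \<forall>n. 0 \<le> D n \<omega>"
    using dec lim unfolding D_def
  proof eventually_elim
    case (elim \<omega>)
    then have "decseq (\<lambda>n. Xs n \<omega>)"
      by (simp add: decseq_Suc_iff)
    with elim show ?case
      using decseq_ge by fastforce
  qed
  moreover have "D n \<in> Linf M B" for n
    unfolding D_def using Xs X by (simp add: Linf_diff)
  ultimately have D: "D n \<in> Linf_pos M B" for n
    unfolding Linf_pos_def by (auto elim: eventually_mono)
  have "AE \<omega> in M. (\<lambda>n. T (D n) \<omega>) \<longlonglongrightarrow> 0"
  proof (rule tendsto_zero_if_decreasing_to_zero[OF D])
    show "AE \<omega> in M. \<forall>n. D (Suc n) \<omega> \<le> D n \<omega>"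
      using dec unfolding D_def by eventually_elim simp
    show "AE \<omega> in M. (\<lambda>n. D n \<omega>) \<longlonglongrightarrow> 0"
      using lim unfolding D_def by eventually_elim (rule LIM_zero)
  qed
  moreover have "AE \<omega> in M. \<forall>n. T (D n) \<omega> = T (Xs n) \<omega> - T X \<omega>"
    unfolding AE_all_countable D_def using diff Xs X by blast
  moreover have "AE \<omega> in M. \<forall>n. T (Xs (Suc n)) \<omega> \<le> T (Xs n) \<omega>"
    unfolding AE_all_countable using dec Xs by (intro allI mono) (auto elim: eventually_mono)
  ultimately show "AE \<omega> in M. (\<forall>n. T (Xs (Suc n)) \<omega> \<le> T (Xs n) \<omega>) \<and> (\<lambda>n. T (Xs n) \<omega>) \<longlonglongrightarrow> T X \<omega>"
    by eventually_elim (simp add: LIM_zero_iff)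
qed

lemma indicator_mult_vanishes:
  assumes S: "S \<in> sets A" and X: "X \<in> Linf M B"
  shows "AE \<omega> in M. \<omega> \<notin> S \<longrightarrow> T (\<lambda>\<eta>. indicator S \<eta> * X \<eta>) \<omega> = 0"
proof -
  have abs_X: "(\<lambda>\<eta>. \<bar>X \<eta>\<bar>) \<in> Linf_pos M B"
    unfolding Linf_pos_def using Linf_abs[OF X] by simp
  have "(\<lambda>\<eta>. \<bar>indicator S \<eta> * X \<eta>\<bar>) = (\<lambda>\<eta>. indicator S \<eta> * \<bar>X \<eta>\<bar>)"
    by (simp add: abs_mult)
  then have "AE \<omega> in M. \<bar>T (\<lambda>\<eta>. indicator S \<eta> * X \<eta>) \<omega>\<bar> \<le> Mop (\<lambda>\<eta>. indicator S \<eta> * \<bar>X \<eta>\<bar>) \<omega>"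
    using abs_le_Mop_abs[OF Linf_indicator_mult[OF S X]] by simp
  then show ?thesis
    using Mop_indicator_mult[OF S abs_X] by eventually_elim (auto simp: indicator_def)
qed

lemma indicator_mult:
  assumes S: "S \<in> sets A" and X: "X \<in> Linf M B"
  shows "AE \<omega> in M. T (\<lambda>\<eta>. indicator S \<eta> * X \<eta>) \<omega> = indicator S \<omega> * T X \<omega>"
proof -
  define S' where "S' = space M - S"
  have S': "S' \<in> sets A"
    unfolding S'_def using S space_A by (metis sets.compl_sets)
  have SX: "(\<lambda>\<eta>. indicator S \<eta> * X \<eta>) \<in> Linf M B" "(\<lambda>\<eta>. indicator S' \<eta> * X \<eta>) \<in> Linf M B"
    using S S' X by (simp_all add: Linf_indicator_mult)
  have "AE \<omega> in M. X \<omega> = 1 * (indicator S \<omega> * X \<omega>) + 1 * (indicator S' \<omega> * X \<omega>)"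
    by (intro AE_I2) (auto simp: S'_def indicator_def)
  then have "AE \<omega> in M. T X \<omega> = T (\<lambda>\<eta>. 1 * (indicator S \<eta> * X \<eta>) + 1 * (indicator S' \<eta> * X \<eta>)) \<omega>"
    using X Linf_lincomb[OF SX] by (intro AE_cong)
  then have "AE \<omega> in M. T X \<omega> = T (\<lambda>\<eta>. indicator S \<eta> * X \<eta>) \<omega> + T (\<lambda>\<eta>. indicator S' \<eta> * X \<eta>) \<omega>"
    using lincomb[OF SX, of 1 1] by eventually_elim simp
  then show ?thesis
    using indicator_mult_vanishes[OF S X] indicator_mult_vanishes[OF S' X] AE_space
    by eventually_elim (auto simp: S'_def indicator_def)
qed

lemma homogeneous_on_level_set:
  assumes l: "l \<in> Linf M A" and X: "X \<in> Linf M B" and S: "S \<in> sets A"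
    and level: "\<And>\<omega>. \<omega> \<in> S \<Longrightarrow> a \<le> l \<omega> \<and> l \<omega> \<le> a + e"
  shows "AE \<omega> in M. \<omega> \<in> S \<longrightarrow> \<bar>T (\<lambda>\<eta>. l \<eta> * X \<eta>) \<omega> - l \<omega> * T X \<omega>\<bar> \<le> 2 * e * T (\<lambda>\<eta>. \<bar>X \<eta>\<bar>) \<omega>"
proof -
  have lX: "(\<lambda>\<eta>. l \<eta> * X \<eta>) \<in> Linf M B"
    by (rule Linf_mult[OF Linf_A_B[OF l] X])
  have abs_X: "(\<lambda>\<eta>. \<bar>X \<eta>\<bar>) \<in> Linf M B"
    by (rule Linf_abs[OF X])
  define Q where "Q \<eta> = l \<eta> * X \<eta> - a * X \<eta>" for \<eta>
  have Q: "Q \<in> Linf M B"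
    unfolding Q_def by (intro Linf_diff lX Linf_scale X)
  have "\<bar>indicator S \<eta> * Q \<eta>\<bar> \<le> e * (indicator S \<eta> * \<bar>X \<eta>\<bar>)" for \<eta>
    using level[of \<eta>] by (auto simp: Q_def indicator_def abs_mult left_diff_distrib[symmetric] intro!: mult_right_mono)
  then have "AE \<omega> in M. \<bar>T (\<lambda>\<eta>. indicator S \<eta> * Q \<eta>) \<omega>\<bar> \<le> T (\<lambda>\<eta>. e * (indicator S \<eta> * \<bar>X \<eta>\<bar>)) \<omega>"
    using S Q abs_X by (intro abs_le Linf_indicator_mult Linf_scale AE_I2) auto
  moreover have "AE \<omega> in M. T (\<lambda>\<eta>. e * (indicator S \<eta> * \<bar>X \<eta>\<bar>)) \<omega> = e * (indicator S \<omega> * T (\<lambda>\<eta>. \<bar>X \<eta>\<bar>) \<omega>)"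
    using scale[OF Linf_indicator_mult[OF S abs_X], of e] indicator_mult[OF S abs_X] by eventually_elim simp
  moreover have "AE \<omega> in M. T (\<lambda>\<eta>. indicator S \<eta> * Q \<eta>) \<omega> = indicator S \<omega> * (T (\<lambda>\<eta>. l \<eta> * X \<eta>) \<omega> - a * T X \<omega>)"
    using indicator_mult[OF S Q] diff[OF lX Linf_scale[OF X, of a]] scale[OF X, of a]
    unfolding Q_def by eventually_elim simp
  moreover have "AE \<omega> in M. \<bar>T X \<omega>\<bar> \<le> T (\<lambda>\<eta>. \<bar>X \<eta>\<bar>) \<omega>"
    using X abs_X by (intro abs_le) auto
  ultimately show ?thesis
  proof eventually_elim
    case (elim \<omega>)
    show ?case
    proof
      assume "\<omega> \<in> S"
      then have "\<bar>T (\<lambda>\<eta>. l \<eta> * X \<eta>) \<omega> - a * T X \<omega>\<bar> \<le> e * T (\<lambda>\<eta>. \<bar>X \<eta>\<bar>) \<omega>"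
        and "\<bar>(l \<omega> - a) * T X \<omega>\<bar> \<le> e * T (\<lambda>\<eta>. \<bar>X \<eta>\<bar>) \<omega>"
        using elim level[of \<omega>] by (auto simp: abs_mult intro!: mult_mono)
      then show "\<bar>T (\<lambda>\<eta>. l \<eta> * X \<eta>) \<omega> - l \<omega> * T X \<omega>\<bar> \<le> 2 * e * T (\<lambda>\<eta>. \<bar>X \<eta>\<bar>) \<omega>"
        by (simp add: left_diff_distrib abs_le_iff)
    qed
  qed
qed

lemma homogeneous: "homogeneous_op M A (Linf M B) T"
  unfolding homogeneous_op_def
proof (intro ballI)
  fix l X assume l: "l \<in> Linf_pos M A" and X: "X \<in> Linf M B"
  have l_A: "l \<in> Linf M A"
    using l by (rule Linf_pos_Linf)
  have [measurable]: "l \<in> borel_measurable A"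
    using l_A by (rule Linf_measurable)
  define level where
    "level n k = {\<omega> \<in> space A. k / real (Suc n) \<le> l \<omega> \<and> l \<omega> \<le> (k + 1) / real (Suc n)}" for n :: nat and k :: int
  have "AE \<omega> in M. \<forall>n k. \<omega> \<in> level n k \<longrightarrow>
      \<bar>T (\<lambda>\<eta>. l \<eta> * X \<eta>) \<omega> - l \<omega> * T X \<omega>\<bar> \<le> 2 * (1 / real (Suc n)) * T (\<lambda>\<eta>. \<bar>X \<eta>\<bar>) \<omega>"
    unfolding AE_all_countable
    by (intro allI homogeneous_on_level_set[OF l_A X]) (auto simp: level_def add_divide_distrib)
  then show "AE \<omega> in M. T (\<lambda>\<eta>. l \<eta> * X \<eta>) \<omega> = l \<omega> * T X \<omega>"
    using AE_space
  proof eventually_elim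
    case (elim \<omega>)
    have "\<omega> \<in> level n \<lfloor>l \<omega> * real (Suc n)\<rfloor>" for n
      using elim floor_mult_Suc_bounds[of "l \<omega>" n] by (simp add: level_def space_A)
    then have "\<bar>T (\<lambda>\<eta>. l \<eta> * X \<eta>) \<omega> - l \<omega> * T X \<omega>\<bar> \<le> 2 * T (\<lambda>\<eta>. \<bar>X \<eta>\<bar>) \<omega> / real (Suc n)" for n
      using elim by fastforce
    then show ?case
      using eq_0_if_abs_le_div_Suc by fastforce
  qed
qed

end

section \<open>Extension by Zorn's lemma\<close>

lemma lin_subspace_lincomb: "lin_subspace D \<Longrightarrow> X \<in> D \<Longrightarrow> Y \<in> D \<Longrightarrow> (\<lambda>\<eta>. a * X \<eta> + b * Y \<eta>) \<in> D"
  unfolding lin_subspace_def by blast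

lemma lin_subspace_decomposition_unique:
  assumes D: "lin_subspace D" and Z: "Z \<notin> D" and U: "U \<in> D" "U' \<in> D"
    and eq: "(\<lambda>\<eta>. U \<eta> + t * Z \<eta>) = (\<lambda>\<eta>. U' \<eta> + t' * Z \<eta>)"
  shows "t = t' \<and> U = U'"
proof (cases "t = t'")
  case True
  then show ?thesis
    using eq by (auto simp: fun_eq_iff)
next
  case False
  have "Z \<eta> = (1 / (t' - t)) * U \<eta> + (- 1 / (t' - t)) * U' \<eta>" for \<eta>
  proof -
    have "(t' - t) * Z \<eta> = U \<eta> - U' \<eta>"
      using fun_cong[OF eq, of \<eta>] by (simp add: algebra_simps)
    then have "Z \<eta> = (U \<eta> - U' \<eta>) / (t' - t)"
      using False by (simp add: eq_divide_eq mult.commute)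
    then show ?thesis
      by (simp add: diff_divide_distrib)
  qed
  then have "Z = (\<lambda>\<eta>. (1 / (t' - t)) * U \<eta> + (- 1 / (t' - t)) * U' \<eta>)"
    by blast
  then show ?thesis
    using lin_subspace_lincomb[OF D U] Z by metis
qed

lemma lin_subspace_fst_Union_chain:
  assumes chain: "subset.chain UNIV C" and C_ne: "C \<noteq> {}"
    and sub: "\<And>G. G \<in> C \<Longrightarrow> lin_subspace (fst ` G)"
  shows "lin_subspace (fst ` \<Union>C)"
  unfolding lin_subspace_def
proof (intro conjI ballI allI)
  show "(\<lambda>_. 0) \<in> fst ` \<Union>C"
    using C_ne sub unfolding lin_subspace_def by blast
next
  fix X Y a b assume "X \<in> fst ` \<Union>C" "Y \<in> fst ` \<Union>C"
  then obtain p q where pq: "p \<in> \<Union>C" "q \<in> \<Union>C" "X = fst p" "Y = fst q"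
    by blast
  then obtain G where G: "G \<in> C" "{p, q} \<subseteq> G"
    using finite_subset_Union_chain[of "{p, q}" C UNIV] chain C_ne by auto
  with pq have "X \<in> fst ` G" "Y \<in> fst ` G"
    by auto
  then have "(\<lambda>\<eta>. a * X \<eta> + b * Y \<eta>) \<in> fst ` G"
    by (rule lin_subspace_lincomb[OF sub[OF G(1)]])
  with G(1) show "(\<lambda>\<eta>. a * X \<eta> + b * Y \<eta>) \<in> fst ` \<Union>C"
    by blast
qed

definition graph_extension ::
    "(('a \<Rightarrow> real) \<times> ('a \<Rightarrow> real)) set \<Rightarrow> ('a \<Rightarrow> real) \<Rightarrow> ('a \<Rightarrow> real) \<Rightarrow> (('a \<Rightarrow> real) \<times> ('a \<Rightarrow> real)) set" where
  "graph_extension G Z c = {((\<lambda>\<eta>. U \<eta> + t * Z \<eta>), (\<lambda>\<eta>. u \<eta> + t * c \<eta>)) | U u t. (U, u) \<in> G}"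

lemma graph_extensionE:
  assumes "p \<in> graph_extension G Z c"
  obtains U u t where "(U, u) \<in> G" "p = ((\<lambda>\<eta>. U \<eta> + t * Z \<eta>), (\<lambda>\<eta>. u \<eta> + t * c \<eta>))"
  using assms unfolding graph_extension_def by blast

lemma subset_graph_extension: "G \<subseteq> graph_extension G Z c"
proof
  fix p assume "p \<in> G"
  then show "p \<in> graph_extension G Z c"
    unfolding graph_extension_def by (intro CollectI exI[of _ "fst p"] exI[of _ "snd p"] exI[of _ 0]) simp
qed

lemma fst_graph_extension:
  "fst ` graph_extension G Z c = {(\<lambda>\<eta>. U \<eta> + t * Z \<eta>) | U t. U \<in> fst ` G}"
  unfolding graph_extension_def by force

lemma lin_subspace_graph_extension:
  assumes D: "lin_subspace (fst ` G)"
  shows "lin_subspace (fst ` graph_extension G Z c)"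
  unfolding lin_subspace_def fst_graph_extension
proof (intro conjI ballI allI)
  show "(\<lambda>_. 0) \<in> {(\<lambda>\<eta>. U \<eta> + t * Z \<eta>) | U t. U \<in> fst ` G}"
    using D unfolding lin_subspace_def by (auto intro!: exI[of _ "\<lambda>_. 0"] exI[of _ 0])
next
  fix X Y a b
  assume "X \<in> {(\<lambda>\<eta>. U \<eta> + t * Z \<eta>) | U t. U \<in> fst ` G}" "Y \<in> {(\<lambda>\<eta>. U \<eta> + t * Z \<eta>) | U t. U \<in> fst ` G}"
  then obtain U1 t1 U2 t2 where X: "X = (\<lambda>\<eta>. U1 \<eta> + t1 * Z \<eta>)" "U1 \<in> fst ` G"
    and Y: "Y = (\<lambda>\<eta>. U2 \<eta> + t2 * Z \<eta>)" "U2 \<in> fst ` G"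
    by blast
  have eq: "(\<lambda>\<eta>. a * X \<eta> + b * Y \<eta>) = (\<lambda>\<eta>. (a * U1 \<eta> + b * U2 \<eta>) + (a * t1 + b * t2) * Z \<eta>)"
    unfolding X Y by (simp add: algebra_simps)
  have mem: "(\<lambda>\<eta>. a * U1 \<eta> + b * U2 \<eta>) \<in> fst ` G"
    by (rule lin_subspace_lincomb[OF D X(2) Y(2)])
  show "(\<lambda>\<eta>. a * X \<eta> + b * Y \<eta>) \<in> {(\<lambda>\<eta>. U \<eta> + t * Z \<eta>) | U t. U \<in> fst ` G}"
    unfolding eq by (intro CollectI exI[of _ "\<lambda>\<eta>. a * U1 \<eta> + b * U2 \<eta>"] exI[of _ "a * t1 + b * t2"] conjI refl mem)
qed

lemma fst_image_memI: "(X, u) \<in> G \<Longrightarrow> X \<in> fst ` G"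
  using image_eqI[of X fst "(X, u)" G] by simp

definition graph_op :: "(('a \<Rightarrow> real) \<times> ('a \<Rightarrow> real)) set \<Rightarrow> ('a \<Rightarrow> real) \<Rightarrow> ('a \<Rightarrow> real)" where
  "graph_op G X = (SOME u. (X, u) \<in> G)"

lemma graph_op_mem:
  assumes "X \<in> fst ` G"
  shows "(X, graph_op G X) \<in> G"
proof -
  obtain u where "(X, u) \<in> G"
    using assms by force
  then show ?thesis
    unfolding graph_op_def by (rule someI[where P = "\<lambda>u. (X, u) \<in> G"])
qed

locale extension_problem = sublinear_dominator +
  fixes L :: "('a \<Rightarrow> real) set" and x :: "('a \<Rightarrow> real) \<Rightarrow> ('a \<Rightarrow> real)"
  assumes lin_L: "lin_subspace L" and L_Linf: "L \<subseteq> Linf M B"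
    and x_Linf: "\<forall>X\<in>L. x X \<in> Linf M A" and x_linear: "linear_op M L x"
    and x_dominated: "\<forall>X\<in>L. \<forall>Y\<in>Linf_pos M B. (AE \<omega> in M. X \<omega> \<le> Y \<omega>) \<longrightarrow> (AE \<omega> in M. x X \<omega> \<le> Mop Y \<omega>)"
begin

text \<open>
  Partial extensions are represented by their graphs, so that Zorn's lemma applies to inclusion.
  The linearity clause (with \<open>a = 1, b = 0\<close>) makes an admissible graph functional up to null sets.
\<close>

definition admissible :: "(('a \<Rightarrow> real) \<times> ('a \<Rightarrow> real)) set \<Rightarrow> bool" where
  "admissible G \<longleftrightarrow> lin_subspace (fst ` G) \<and> L \<subseteq> fst ` G \<and> fst ` G \<subseteq> Linf M B \<and>
    (\<forall>X u. (X, u) \<in> G \<longrightarrow> u \<in> Linf M A \<and> (X \<in> L \<longrightarrow> (AE \<omega> in M. u \<omega> = x X \<omega>))) \<and>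
    (\<forall>X u Y v a b w. (X, u) \<in> G \<longrightarrow> (Y, v) \<in> G \<longrightarrow> ((\<lambda>\<eta>. a * X \<eta> + b * Y \<eta>), w) \<in> G \<longrightarrow>
       (AE \<omega> in M. w \<omega> = a * u \<omega> + b * v \<omega>)) \<and>
    (\<forall>X u Y. (X, u) \<in> G \<longrightarrow> Y \<in> Linf_pos M B \<longrightarrow> (AE \<omega> in M. X \<omega> \<le> Y \<omega>) \<longrightarrow>
       (AE \<omega> in M. u \<omega> \<le> Mop Y \<omega>))"

lemma
  assumes "admissible G"
  shows admissible_subspace: "lin_subspace (fst ` G)"
    and admissible_L: "L \<subseteq> fst ` G"
    and admissible_Linf: "fst ` G \<subseteq> Linf M B"
    and admissible_value_Linf: "(X, u) \<in> G \<Longrightarrow> u \<in> Linf M A"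
    and admissible_extends: "(X, u) \<in> G \<Longrightarrow> X \<in> L \<Longrightarrow> AE \<omega> in M. u \<omega> = x X \<omega>"
    and admissible_lincomb: "(X, u) \<in> G \<Longrightarrow> (Y, v) \<in> G \<Longrightarrow> ((\<lambda>\<eta>. a * X \<eta> + b * Y \<eta>), w) \<in> G \<Longrightarrow>
      AE \<omega> in M. w \<omega> = a * u \<omega> + b * v \<omega>"
    and admissible_dominated: "(X, u) \<in> G \<Longrightarrow> Y \<in> Linf_pos M B \<Longrightarrow> (AE \<omega> in M. X \<omega> \<le> Y \<omega>) \<Longrightarrow>
      AE \<omega> in M. u \<omega> \<le> Mop Y \<omega>"
  using assms unfolding admissible_def by simp_all

lemma admissible_scale:
  assumes G: "admissible G" and Xu: "(X, u) \<in> G"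
  obtains u' where "((\<lambda>\<eta>. r * X \<eta>), u') \<in> G" "AE \<omega> in M. u' \<omega> = r * u \<omega>"
proof -
  have "(\<lambda>\<eta>. r * X \<eta> + 0 * X \<eta>) \<in> fst ` G"
    using Xu by (intro lin_subspace_lincomb[OF admissible_subspace[OF G]]) force+
  then obtain u' where u': "((\<lambda>\<eta>. r * X \<eta>), u') \<in> G"
    by auto
  then have "AE \<omega> in M. u' \<omega> = r * u \<omega> + 0 * u \<omega>"
    using admissible_lincomb[OF G Xu Xu, of r 0 u'] by simp
  with u' that show ?thesis
    by simp
qed

lemma admissible_zero:
  assumes G: "admissible G"
  obtains u0 where "((\<lambda>_. 0), u0) \<in> G" "AE \<omega> in M. u0 \<omega> = 0"
proof -
  obtain u0 where u0: "((\<lambda>_. 0), u0) \<in> G"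
    using admissible_subspace[OF G] unfolding lin_subspace_def by auto
  with admissible_scale[OF G u0, of 0] that show ?thesis
    by auto
qed

lemma admissible_graph_x: "admissible {(X, x X) | X. X \<in> L}"
proof -
  have "fst ` {(X, x X) | X. X \<in> L} = L"
    by force
  then show ?thesis
    using lin_L L_Linf x_Linf x_linear x_dominated unfolding admissible_def linear_op_def by auto
qed

lemma admissible_Union_chain:
  assumes C: "C \<in> chains {G. admissible G}" and C_ne: "C \<noteq> {}"
  shows "admissible (\<Union>C)"
proof -
  have adm: "\<And>G. G \<in> C \<Longrightarrow> admissible G"
    using C by (auto simp: chains_def)
  have chain: "subset.chain UNIV C"
    using C by (simp add: chains_def chain_subset_alt_def)
  have in_one: "\<exists>G\<in>C. P \<subseteq> G" if "finite P" "P \<subseteq> \<Union>C" for P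
    using finite_subset_Union_chain[OF that C_ne chain] by blast
  show ?thesis
    unfolding admissible_def
  proof (intro conjI allI impI)
    show "lin_subspace (fst ` \<Union>C)"
      using lin_subspace_fst_Union_chain[OF chain C_ne] admissible_subspace[OF adm] by blast
    show "L \<subseteq> fst ` \<Union>C"
      using C_ne admissible_L[OF adm] by blast
    show "fst ` \<Union>C \<subseteq> Linf M B"
      using admissible_Linf[OF adm] by fastforce
  next
    fix X u Y v a b w
    assume "(X, u) \<in> \<Union>C" "(Y, v) \<in> \<Union>C" "((\<lambda>\<eta>. a * X \<eta> + b * Y \<eta>), w) \<in> \<Union>C"
    then have "{(X, u), (Y, v), ((\<lambda>\<eta>. a * X \<eta> + b * Y \<eta>), w)} \<subseteq> \<Union>C"
      by blast
    then obtain G where "G \<in> C" "{(X, u), (Y, v), ((\<lambda>\<eta>. a * X \<eta> + b * Y \<eta>), w)} \<subseteq> G"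
      using in_one by (meson finite.emptyI finite.insertI)
    then show "AE \<omega> in M. w \<omega> = a * u \<omega> + b * v \<omega>"
      by (intro admissible_lincomb[OF adm[of G], of X u Y v]) simp_all
  next
    fix X u assume "(X, u) \<in> \<Union>C"
    then obtain G where G: "G \<in> C" "(X, u) \<in> G"
      by blast
    then show "u \<in> Linf M A"
      by (intro admissible_value_Linf[OF adm])
    show "X \<in> L \<Longrightarrow> AE \<omega> in M. u \<omega> = x X \<omega>"
      using G by (intro admissible_extends[OF adm])
  next
    fix X u Y assume "(X, u) \<in> \<Union>C" "Y \<in> Linf_pos M B" "AE \<omega> in M. X \<omega> \<le> Y \<omega>"
    then show "AE \<omega> in M. u \<omega> \<le> Mop Y \<omega>"
      using admissible_dominated[OF adm] by blast
  qed
qed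

definition separating :: "(('a \<Rightarrow> real) \<times> ('a \<Rightarrow> real)) set \<Rightarrow> ('a \<Rightarrow> real) \<Rightarrow> ('a \<Rightarrow> real) \<Rightarrow> bool" where
  "separating G Z c \<longleftrightarrow> (\<forall>U u Y \<sigma>. (U, u) \<in> G \<longrightarrow> Y \<in> Linf_pos M B \<longrightarrow> \<sigma> \<in> {-1, 1} \<longrightarrow>
     (AE \<omega> in M. U \<omega> + \<sigma> * Z \<omega> \<le> Y \<omega>) \<longrightarrow> (AE \<omega> in M. u \<omega> + \<sigma> * c \<omega> \<le> Mop Y \<omega>))"

definition lower_values :: "(('a \<Rightarrow> real) \<times> ('a \<Rightarrow> real)) set \<Rightarrow> ('a \<Rightarrow> real) \<Rightarrow> ('a \<Rightarrow> real) set" where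
  "lower_values G Z = {(\<lambda>\<omega>. w \<omega> - Mop Y \<omega>) | W w Y.
     (W, w) \<in> G \<and> Y \<in> Linf_pos M B \<and> (AE \<omega> in M. W \<omega> - Z \<omega> \<le> Y \<omega>)}"

definition upper_values :: "(('a \<Rightarrow> real) \<times> ('a \<Rightarrow> real)) set \<Rightarrow> ('a \<Rightarrow> real) \<Rightarrow> ('a \<Rightarrow> real) set" where
  "upper_values G Z = {(\<lambda>\<omega>. Mop Y \<omega> - u \<omega>) | U u Y.
     (U, u) \<in> G \<and> Y \<in> Linf_pos M B \<and> (AE \<omega> in M. U \<omega> + Z \<omega> \<le> Y \<omega>)}"

lemma lower_le_upper:
  assumes G: "admissible G" and "f \<in> lower_values G Z" and "g \<in> upper_values G Z"
  shows "AE \<omega> in M. f \<omega> \<le> g \<omega>"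
proof -
  obtain W w Y' where f: "f = (\<lambda>\<omega>. w \<omega> - Mop Y' \<omega>)" and Ww: "(W, w) \<in> G" and Y': "Y' \<in> Linf_pos M B"
    and lower: "AE \<omega> in M. W \<omega> - Z \<omega> \<le> Y' \<omega>"
    using assms(2) unfolding lower_values_def by blast
  obtain U u Y where g: "g = (\<lambda>\<omega>. Mop Y \<omega> - u \<omega>)" and Uu: "(U, u) \<in> G" and Y: "Y \<in> Linf_pos M B"
    and upper: "AE \<omega> in M. U \<omega> + Z \<omega> \<le> Y \<omega>"
    using assms(3) unfolding upper_values_def by blast
  have "(\<lambda>\<eta>. 1 * W \<eta> + 1 * U \<eta>) \<in> fst ` G"
    using Ww Uu by (intro lin_subspace_lincomb[OF admissible_subspace[OF G]] fst_image_memI)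
  then obtain s where s: "((\<lambda>\<eta>. 1 * W \<eta> + 1 * U \<eta>), s) \<in> G"
    by auto
  have "AE \<omega> in M. 1 * W \<omega> + 1 * U \<omega> \<le> Y \<omega> + Y' \<omega>"
    using upper lower by eventually_elim simp
  then have "AE \<omega> in M. s \<omega> \<le> Mop (\<lambda>\<eta>. Y \<eta> + Y' \<eta>) \<omega>"
    by (rule admissible_dominated[OF G s Linf_pos_add[OF Y Y']])
  then show ?thesis
    using admissible_lincomb[OF G Ww Uu s] Mop_add[OF Y Y'] unfolding f g by eventually_elim simp
qed

lemma
  assumes "admissible G"
  shows lower_values_Linf: "lower_values G Z \<subseteq> Linf M A"
    and upper_values_Linf: "upper_values G Z \<subseteq> Linf M A"
  using admissible_value_Linf[OF assms] Mop_Linf Linf_diff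
  unfolding lower_values_def upper_values_def by blast+

lemma ex_lower_upper_values:
  assumes G: "admissible G" and Z: "Z \<in> Linf M B"
  obtains f g where "f \<in> lower_values G Z" "g \<in> upper_values G Z"
proof -
  obtain u0 where u0: "((\<lambda>_. 0), u0) \<in> G"
    using admissible_zero[OF G] by blast
  show ?thesis
  proof (rule that)
    show "(\<lambda>\<omega>. u0 \<omega> - Mop (\<lambda>\<eta>. max 0 (- Z \<eta>)) \<omega>) \<in> lower_values G Z"
      unfolding lower_values_def using u0 Linf_pos_max_0[OF Linf_scale[OF Z, of "-1"]]
      by (intro CollectI exI[of _ "\<lambda>_. 0"] exI[of _ u0] exI[of _ "\<lambda>\<eta>. max 0 (- Z \<eta>)"])
        (auto intro!: AE_I2)
    show "(\<lambda>\<omega>. Mop (\<lambda>\<eta>. max 0 (Z \<eta>)) \<omega> - u0 \<omega>) \<in> upper_values G Z"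
      unfolding upper_values_def using u0 Linf_pos_max_0[OF Z]
      by (intro CollectI exI[of _ "\<lambda>_. 0"] exI[of _ u0] exI[of _ "\<lambda>\<eta>. max 0 (Z \<eta>)"])
        (auto intro!: AE_I2)
  qed
qed

lemma separatingI:
  assumes lower: "\<And>f. f \<in> lower_values G Z \<Longrightarrow> AE \<omega> in M. f \<omega> \<le> c \<omega>"
    and upper: "\<And>g. g \<in> upper_values G Z \<Longrightarrow> AE \<omega> in M. c \<omega> \<le> g \<omega>"
  shows "separating G Z c"
  unfolding separating_def
proof (intro allI impI)
  fix U u Y and \<sigma> :: real
  assume hyps: "(U, u) \<in> G" "Y \<in> Linf_pos M B" and "\<sigma> \<in> {-1, 1}"
    and le: "AE \<omega> in M. U \<omega> + \<sigma> * Z \<omega> \<le> Y \<omega>"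
  from \<open>\<sigma> \<in> {-1, 1}\<close> consider "\<sigma> = 1" | "\<sigma> = -1"
    by blast
  then show "AE \<omega> in M. u \<omega> + \<sigma> * c \<omega> \<le> Mop Y \<omega>"
  proof cases
    case 1
    with hyps le have "(\<lambda>\<omega>. Mop Y \<omega> - u \<omega>) \<in> upper_values G Z"
      unfolding upper_values_def by auto
    from upper[OF this] show ?thesis
      unfolding 1 by eventually_elim simp
  next
    case 2
    with hyps le have "(\<lambda>\<omega>. u \<omega> - Mop Y \<omega>) \<in> lower_values G Z"
      unfolding lower_values_def by auto
    from lower[OF this] show ?thesis
      unfolding 2 by eventually_elim simp
  qed
qed

lemma ex_separating:
  assumes G: "admissible G" and Z: "Z \<in> Linf M B"
  obtains c where "c \<in> Linf M A" "separating G Z c"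
proof -
  obtain f0 g0 where f0: "f0 \<in> lower_values G Z" and g0: "g0 \<in> upper_values G Z"
    using ex_lower_upper_values[OF G Z] .
  have lower_A: "lower_values G Z \<subseteq> borel_measurable A"
    using lower_values_Linf[OF G] Linf_measurable by blast
  obtain c where c_A: "c \<in> borel_measurable A"
    and c_lower: "\<And>f. f \<in> lower_values G Z \<Longrightarrow> AE \<omega> in M. f \<omega> \<le> c \<omega>"
    and c_least: "\<And>u. (\<And>f. f \<in> lower_values G Z \<Longrightarrow> AE \<omega> in M. f \<omega> \<le> u \<omega>) \<Longrightarrow> AE \<omega> in M. c \<omega> \<le> u \<omega>"
    using ex_ess_sup[OF prob sub_A lower_A f0 Linf_measurable lower_le_upper[OF G _ g0]]
      upper_values_Linf[OF G] g0 by blast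
  have c_upper: "AE \<omega> in M. c \<omega> \<le> g \<omega>" if "g \<in> upper_values G Z" for g
    using c_least lower_le_upper[OF G _ that] by blast
  show ?thesis
  proof
    obtain k1 k2 where "AE \<omega> in M. \<bar>f0 \<omega>\<bar> \<le> k1" "AE \<omega> in M. \<bar>g0 \<omega>\<bar> \<le> k2"
      using f0 g0 lower_values_Linf[OF G] upper_values_Linf[OF G] by (metis LinfE subsetD)
    with c_lower[OF f0] c_upper[OF g0] have "AE \<omega> in M. \<bar>c \<omega>\<bar> \<le> max k1 k2"
      by eventually_elim auto
    with c_A show "c \<in> Linf M A"
      by (rule LinfI)
    show "separating G Z c"
      using c_lower c_upper by (rule separatingI)
  qed
qed

lemma graph_extension_lincomb:
  assumes G: "admissible G" and Z: "Z \<notin> fst ` G"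
    and p1: "(X1, w1) \<in> graph_extension G Z c" and p2: "(X2, w2) \<in> graph_extension G Z c"
    and p3: "((\<lambda>\<eta>. a * X1 \<eta> + b * X2 \<eta>), w3) \<in> graph_extension G Z c"
  shows "AE \<omega> in M. w3 \<omega> = a * w1 \<omega> + b * w2 \<omega>"
proof -
  obtain U1 u1 t1 where U1: "(U1, u1) \<in> G" "X1 = (\<lambda>\<eta>. U1 \<eta> + t1 * Z \<eta>)" "w1 = (\<lambda>\<eta>. u1 \<eta> + t1 * c \<eta>)"
    using p1 by (rule graph_extensionE) simp
  obtain U2 u2 t2 where U2: "(U2, u2) \<in> G" "X2 = (\<lambda>\<eta>. U2 \<eta> + t2 * Z \<eta>)" "w2 = (\<lambda>\<eta>. u2 \<eta> + t2 * c \<eta>)"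
    using p2 by (rule graph_extensionE) simp
  obtain U3 u3 t3 where U3: "(U3, u3) \<in> G" "(\<lambda>\<eta>. a * X1 \<eta> + b * X2 \<eta>) = (\<lambda>\<eta>. U3 \<eta> + t3 * Z \<eta>)"
      "w3 = (\<lambda>\<eta>. u3 \<eta> + t3 * c \<eta>)"
    using p3 by (rule graph_extensionE) simp
  have "(\<lambda>\<eta>. a * U1 \<eta> + b * U2 \<eta>) \<in> fst ` G"
    using U1(1) U2(1) by (intro lin_subspace_lincomb[OF admissible_subspace[OF G]] fst_image_memI)
  moreover have "(\<lambda>\<eta>. U3 \<eta> + t3 * Z \<eta>) = (\<lambda>\<eta>. (a * U1 \<eta> + b * U2 \<eta>) + (a * t1 + b * t2) * Z \<eta>)"
    unfolding U3(2)[symmetric] U1(2) U2(2) by (simp add: algebra_simps)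
  ultimately have "t3 = a * t1 + b * t2 \<and> U3 = (\<lambda>\<eta>. a * U1 \<eta> + b * U2 \<eta>)"
    using lin_subspace_decomposition_unique[OF admissible_subspace[OF G] Z fst_image_memI[OF U3(1)]] by blast
  then have t3: "t3 = a * t1 + b * t2" and u3: "AE \<omega> in M. u3 \<omega> = a * u1 \<omega> + b * u2 \<omega>"
    using admissible_lincomb[OF G U1(1) U2(1)] U3(1) by auto
  show ?thesis
    using u3 unfolding U1(3) U2(3) U3(3) t3 by eventually_elim (simp add: algebra_simps)
qed

lemma graph_extension_dominated:
  assumes G: "admissible G" and sep: "separating G Z c"
    and p: "(X, w) \<in> graph_extension G Z c" and Y: "Y \<in> Linf_pos M B" and le: "AE \<omega> in M. X \<omega> \<le> Y \<omega>"
  shows "AE \<omega> in M. w \<omega> \<le> Mop Y \<omega>"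
proof -
  obtain U u t where Uu: "(U, u) \<in> G" and X: "X = (\<lambda>\<eta>. U \<eta> + t * Z \<eta>)" and w: "w = (\<lambda>\<eta>. u \<eta> + t * c \<eta>)"
    using p by (rule graph_extensionE) simp
  show ?thesis
  proof (cases "t = 0")
    case True
    then show ?thesis
      using admissible_dominated[OF G Uu Y] le unfolding X w by simp
  next
    case False
    obtain \<sigma> s where s: "0 < s" "t = \<sigma> * s" "\<sigma> \<in> {-1, 1}"
      using False by (intro that[of "\<bar>t\<bar>" "sgn t"]) (auto simp: sgn_if)
    obtain u' where u': "((\<lambda>\<eta>. (1 / s) * U \<eta>), u') \<in> G" "AE \<omega> in M. u' \<omega> = (1 / s) * u \<omega>"
      using admissible_scale[OF G Uu] .
    have "AE \<omega> in M. (1 / s) * U \<omega> + \<sigma> * Z \<omega> \<le> (1 / s) * Y \<omega>"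
      using le unfolding X s(2)
    proof eventually_elim
      case (elim \<omega>)
      with s(1) have "(1 / s) * (U \<omega> + \<sigma> * s * Z \<omega>) \<le> (1 / s) * Y \<omega>"
        by (simp add: divide_right_mono)
      then show ?case
        using s(1) by (simp add: field_simps)
    qed
    moreover have "(\<lambda>\<eta>. (1 / s) * Y \<eta>) \<in> Linf_pos M B"
      using s(1) by (intro Linf_pos_scale[OF Y]) simp
    ultimately have "AE \<omega> in M. u' \<omega> + \<sigma> * c \<omega> \<le> Mop (\<lambda>\<eta>. (1 / s) * Y \<eta>) \<omega>"
      using sep u'(1) s(3) unfolding separating_def by blast
    moreover have "AE \<omega> in M. Mop (\<lambda>\<eta>. (1 / s) * Y \<eta>) \<omega> = (1 / s) * Mop Y \<omega>"
      using s(1) by (intro Mop_scale[OF Y]) simp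
    ultimately show ?thesis
      using u'(2) unfolding w
    proof eventually_elim
      case (elim \<omega>)
      then have "s * ((1 / s) * u \<omega> + \<sigma> * c \<omega>) \<le> s * ((1 / s) * Mop Y \<omega>)"
        using s(1) by (intro mult_left_mono) auto
      then show ?case
        using s(1) unfolding s(2) by (simp add: algebra_simps)
    qed
  qed
qed

lemma admissible_graph_extension:
  assumes G: "admissible G" and Z_B: "Z \<in> Linf M B" and Z: "Z \<notin> fst ` G"
    and c: "c \<in> Linf M A" and sep: "separating G Z c"
  shows "admissible (graph_extension G Z c)"
  unfolding admissible_def
proof (intro conjI allI impI)
  show "lin_subspace (fst ` graph_extension G Z c)"
    by (rule lin_subspace_graph_extension[OF admissible_subspace[OF G]])
  show "L \<subseteq> fst ` graph_extension G Z c"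
    using admissible_L[OF G] subset_graph_extension by blast
  show "fst ` graph_extension G Z c \<subseteq> Linf M B"
  proof
    fix X assume "X \<in> fst ` graph_extension G Z c"
    then obtain U t where "X = (\<lambda>\<eta>. U \<eta> + t * Z \<eta>)" "U \<in> fst ` G"
      unfolding fst_graph_extension by blast
    then show "X \<in> Linf M B"
      using Linf_lincomb[of U M B Z 1 t] admissible_Linf[OF G] Z_B by auto
  qed
next
  fix X w assume "(X, w) \<in> graph_extension G Z c"
  then obtain U u t where Uu: "(U, u) \<in> G" and X: "X = (\<lambda>\<eta>. U \<eta> + t * Z \<eta>)" and w: "w = (\<lambda>\<eta>. u \<eta> + t * c \<eta>)"
    by (rule graph_extensionE) simp
  show "w \<in> Linf M A"
    unfolding w using Linf_lincomb[OF admissible_value_Linf[OF G Uu] c, of 1 t] by simp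
  assume "X \<in> L"
  then have "X \<in> fst ` G"
    using admissible_L[OF G] by blast
  moreover have "(\<lambda>\<eta>. U \<eta> + t * Z \<eta>) = (\<lambda>\<eta>. X \<eta> + 0 * Z \<eta>)"
    using X by simp
  ultimately have "t = 0 \<and> U = X"
    using lin_subspace_decomposition_unique[OF admissible_subspace[OF G] Z fst_image_memI[OF Uu]] by blast
  then show "AE \<omega> in M. w \<omega> = x X \<omega>"
    using admissible_extends[OF G Uu] \<open>X \<in> L\<close> unfolding w by simp
next
  fix X u Y v a b w
  assume "(X, u) \<in> graph_extension G Z c" "(Y, v) \<in> graph_extension G Z c"
    "((\<lambda>\<eta>. a * X \<eta> + b * Y \<eta>), w) \<in> graph_extension G Z c"
  then show "AE \<omega> in M. w \<omega> = a * u \<omega> + b * v \<omega>"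
    by (rule graph_extension_lincomb[OF G Z])
next
  fix X w Y
  assume "(X, w) \<in> graph_extension G Z c" "Y \<in> Linf_pos M B" "AE \<omega> in M. X \<omega> \<le> Y \<omega>"
  then show "AE \<omega> in M. w \<omega> \<le> Mop Y \<omega>"
    by (rule graph_extension_dominated[OF G sep])
qed

lemma ex_admissible_total: "\<exists>G. admissible G \<and> fst ` G = Linf M B"
proof -
  have "\<exists>U\<in>{G. admissible G}. \<forall>G\<in>C. G \<subseteq> U" if C: "C \<in> chains {G. admissible G}" for C
  proof (cases "C = {}")
    case True
    then show ?thesis
      using admissible_graph_x by blast
  next
    case False
    then show ?thesis
      using admissible_Union_chain[OF C False] by blast
  qed
  then have "\<exists>G\<in>{G. admissible G}. \<forall>G'\<in>{G. admissible G}. G \<subseteq> G' \<longrightarrow> G' = G"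
    by (intro Zorn_Lemma2) blast
  then obtain G where G: "admissible G" and max: "\<And>G'. admissible G' \<Longrightarrow> G \<subseteq> G' \<Longrightarrow> G' = G"
    by blast
  have "Z \<in> fst ` G" if Z_B: "Z \<in> Linf M B" for Z
  proof (rule ccontr)
    assume Z: "Z \<notin> fst ` G"
    obtain c where "c \<in> Linf M A" "separating G Z c"
      using ex_separating[OF G Z_B] .
    then have "graph_extension G Z c = G"
      by (intro max admissible_graph_extension[OF G Z_B Z] subset_graph_extension)
    moreover have "Z \<in> fst ` graph_extension G Z c"
    proof -
      obtain u0 where "((\<lambda>_. 0), u0) \<in> G"
        using admissible_zero[OF G] .
      then have "(\<lambda>\<eta>. 0 + 1 * Z \<eta>) \<in> fst ` graph_extension G Z c"
        unfolding fst_graph_extension by (intro CollectI exI[of _ "\<lambda>_. 0"] exI[of _ 1] conjI refl fst_image_memI)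
      then show ?thesis
        by simp
    qed
    ultimately show False
      using Z by simp
  qed
  then show ?thesis
    using G admissible_Linf[OF G] by blast
qed

lemma
  assumes G: "admissible G" and total: "fst ` G = Linf M B"
  shows graph_op_Linf: "X \<in> Linf M B \<Longrightarrow> graph_op G X \<in> Linf M A"
    and graph_op_extends: "X \<in> L \<Longrightarrow> AE \<omega> in M. graph_op G X \<omega> = x X \<omega>"
    and dominated_linear_op_graph_op: "dominated_linear_op M A B Mop (graph_op G)"
proof -
  have mem: "X \<in> Linf M B \<Longrightarrow> (X, graph_op G X) \<in> G" for X
    using graph_op_mem total by blast
  show "X \<in> Linf M B \<Longrightarrow> graph_op G X \<in> Linf M A"
    using admissible_value_Linf[OF G mem] .
  show "X \<in> L \<Longrightarrow> AE \<omega> in M. graph_op G X \<omega> = x X \<omega>"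
    using admissible_extends[OF G mem] L_Linf by blast
  show "dominated_linear_op M A B Mop (graph_op G)"
  proof unfold_locales
    show "linear_op M (Linf M B) (graph_op G)"
      unfolding linear_op_def using admissible_lincomb[OF G mem mem mem] Linf_lincomb by blast
    show "\<forall>X\<in>Linf M B. \<forall>Y\<in>Linf_pos M B. (AE \<omega> in M. X \<omega> \<le> Y \<omega>) \<longrightarrow> (AE \<omega> in M. graph_op G X \<omega> \<le> Mop Y \<omega>)"
      using admissible_dominated[OF G mem] by blast
  qed
qed

end

theorem theorem3p10:
  fixes M A B :: "'a measure"
    and L :: "('a \<Rightarrow> real) set"
    and x Mop :: "('a \<Rightarrow> real) \<Rightarrow> ('a \<Rightarrow> real)"
  assumes "prob_space M" and "complete_measure M"
    and "subalgebra M A" and "subalgebra M B" and "sets A \<subseteq> sets B"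
    and "\<exists>C. countable C \<and> C \<subseteq> sets M \<and> sets B = sigma_sets (space M) (C \<union> null_sets M)"
    and "lin_subspace L" and "L \<subseteq> Linf M B"
    and "\<forall>X\<in>L. x X \<in> Linf M A"
    and "linear_op M L x" and "monotone_op M L x"
    and "\<forall>Y\<in>Linf_pos M B. Mop Y \<in> Linf_pos M A"
    and "respects_ae M (Linf_pos M B) Mop"
    and "regular_op M (Linf_pos M B) Mop"
    and "weak_homogeneous_op M A (Linf_pos M B) Mop"
    and "sublinear_op M (Linf_pos M B) Mop"
    and "\<forall>X\<in>L. \<forall>Y\<in>Linf_pos M B. (AE \<omega> in M. X \<omega> \<le> Y \<omega>) \<longrightarrow> (AE \<omega> in M. x X \<omega> \<le> Mop Y \<omega>)"
  shows "\<exists>x'. (\<forall>X\<in>Linf M B. x' X \<in> Linf M A)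
    \<and> (\<forall>X\<in>L. AE \<omega> in M. x' X \<omega> = x X \<omega>)
    \<and> linear_op M (Linf M B) x' \<and> monotone_op M (Linf M B) x'
    \<and> (\<forall>X\<in>Linf M B. \<forall>Y\<in>Linf_pos M B. (AE \<omega> in M. X \<omega> \<le> Y \<omega>) \<longrightarrow> (AE \<omega> in M. x' X \<omega> \<le> Mop Y \<omega>))
    \<and> cont_above_op M (Linf M B) x'
    \<and> homogeneous_op M A (Linf M B) x'"
proof -
  interpret extension_problem M A B Mop L x
    using assms unfolding extension_problem_def extension_problem_axioms_def sublinear_dominator_def
    by blast
  obtain G where G: "admissible G" "fst ` G = Linf M B"
    using ex_admissible_total by blast
  interpret T: dominated_linear_op M A B Mop "graph_op G"
    by (rule dominated_linear_op_graph_op[OF G])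
  show ?thesis
  proof (intro exI[of _ "graph_op G"] conjI)
    show "monotone_op M (Linf M B) (graph_op G)"
      unfolding monotone_op_def using T.mono by blast
  qed (use graph_op_Linf[OF G] graph_op_extends[OF G] T.linear T.dominated T.cont_above T.homogeneous in auto)
qed

end
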